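(* Fix a token $\texttt{<x>}\in\mathsf{Voc}$, an integer $\ell\ge0$, a length $T\ge1$ with $M\ge T$, and $\varepsilon\in(0,1)$. There exist matrices $\mathbf{K},\mathbf{Q}\in\mathbb{R}^{d\times d}$ such that for every sequence $(\mathbf{h}_1,\dots,\mathbf{h}_T)$ with $\mathbf{h}_i=[\tilde{\mathbf{h}}_i^\top,1,0]^\top$ satisfying (i) $\tilde{\mathbf{h}}_i=\sum_{v\in\mathsf{Voc}}\lambda_{i,v}\tilde{\mathbf{u}}_v$ with $\lambda_{i,v}\ge0$ and $\sum_v\lambda_{i,v}^2=1$ for all $i$, (ii) $\langle\tilde{\mathbf{u}}_{\texttt{<x>}},\tilde{\mathbf{h}}_i\rangle\in\{0,1\}$ for all $i$, and (iii) $\langle\tilde{\mathbf{u}}_{\texttt{<x>}},\tilde{\mathbf{h}}_i\rangle=0$ for $i\le\ell$, it holds for every $i\in[T]$: if $\langle\tilde{\mathbf{h}}_i,\tilde{\mathbf{u}}_{\texttt{<x>}}\rangle=1$ then $s_{i,i-\ell}>1-\varepsilon$, and otherwise $s_{i,1}>1-\varepsilon$, where $s_{i,\cdot}=\mathsf{SoftMax}(\langle\mathbf{q}_i,\mathbf{k}_1\rangle,\dots,\langle\mathbf{q}_i,\mathbf{k}_i\rangle)$ with the rotary queries and keys $\mathbf{q}_j=\mathbf{R}^{(j)}\mathbf{Q}\mathbf{h}_j$, $\mathbf{k}_j=\mathbf{R}^{(j)}\mathbf{K}\mathbf{h}_j$.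
   Context: Vocabulary $\mathsf{Voc}=\{1,\dots,V\}$. Dimension $d=d_\mathsf{TE}+2$ with $d$ and $d_\mathsf{TE}$ even; vectors $\tilde{\mathbf{u}}_v\in\mathbb{R}^{d_\mathsf{TE}}$, $v\in\mathsf{Voc}$, are orthonormal, and token embeddings are $\mathbf{u}_v=[\tilde{\mathbf{u}}_v^\top,0,0]^\top$. Rotary position embedding: $M>0$ is a fixed large integer, $\omega=M^{-2/d}$; for integer $i$ and $k\in\{1,\dots,d/2\}$, $\mathbf{R}^{(i,k)}=\begin{bmatrix}\cos(i\omega^k)&-\sin(i\omega^k)\\ \sin(i\omega^k)&\cos(i\omega^k)\end{bmatrix}$ and $\mathbf{R}^{(i)}=\mathrm{diag}(\mathbf{R}^{(i,1)},\dots,\mathbf{R}^{(i,d/2)})\in\mathbb{R}^{d\times d}$. $\mathsf{SoftMax}(\boldsymbol{x})_j=e^{x_j}/\sum_k e^{x_k}$. *)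

theory Defs
  imports Complex_Main
begin

text \<open>Vectors in R^n are represented as functions nat => real, with coordinates 0..n-1
  (0-based); matrices in R^(n x n) as nat => nat => real with entries (a,b), a,b < n.\<close>

definition vinner :: "nat \<Rightarrow> (nat \<Rightarrow> real) \<Rightarrow> (nat \<Rightarrow> real) \<Rightarrow> real" where
  "vinner n x y = (\<Sum>j<n. x j * y j)"

definition matvec :: "nat \<Rightarrow> (nat \<Rightarrow> nat \<Rightarrow> real) \<Rightarrow> (nat \<Rightarrow> real) \<Rightarrow> (nat \<Rightarrow> real)" where
  "matvec n A x = (\<lambda>a. \<Sum>b<n. A a b * x b)"

definition rope_omega :: "nat \<Rightarrow> nat \<Rightarrow> real" where
  "rope_omega M d = real M powr (- 2 / real d)"

text \<open>Rotary matrix R^(i) = diag(R^(i,1),...,R^(i,d/2)); the k-th 2x2 block (k = 1..d/2)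
  occupies 0-based coordinates 2k-2, 2k-1 and has angle i * omega^k.\<close>
definition rope_mat :: "nat \<Rightarrow> nat \<Rightarrow> int \<Rightarrow> nat \<Rightarrow> nat \<Rightarrow> real" where
  "rope_mat M d i a b =
     (if a < d \<and> b < d \<and> a div 2 = b div 2 then
        (let \<theta> = real_of_int i * rope_omega M d ^ (a div 2 + 1) in
         if even a \<and> even b then cos \<theta>
         else if even a \<and> odd b then - sin \<theta>
         else if odd a \<and> even b then sin \<theta>
         else cos \<theta>)
      else 0)"

definition hvec :: "nat \<Rightarrow> (nat \<Rightarrow> real) \<Rightarrow> (nat \<Rightarrow> real)" where
  "hvec dTE y = (\<lambda>j. if j < dTE then y j else if j = dTE then 1 else 0)"

definition softmax :: "nat \<Rightarrow> (nat \<Rightarrow> real) \<Rightarrow> nat \<Rightarrow> real" where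
  "softmax n z j = exp (z j) / (\<Sum>m\<in>{1..n}. exp (z m))"

definition rope_score ::
  "nat \<Rightarrow> nat \<Rightarrow> (nat \<Rightarrow> nat \<Rightarrow> real) \<Rightarrow> (nat \<Rightarrow> nat \<Rightarrow> real) \<Rightarrow> (nat \<Rightarrow> nat \<Rightarrow> real)
    \<Rightarrow> nat \<Rightarrow> nat \<Rightarrow> real" where
  "rope_score M d K Q h i j =
     (let q = matvec d (rope_mat M d (int i)) (matvec d Q (h i));
          k = (\<lambda>m. matvec d (rope_mat M d (int m)) (matvec d K (h m)))
      in softmax i (\<lambda>m. vinner d q (k m)) j)"

end

theory Submission imports Defs begin

text \<open>Only the last rotary block matters: its frequency is \<open>\<omega> ^ (d/2) = 1/M\<close>, so with
  \<open>T \<le> M\<close> every relative angle \<open>(i - m)/M\<close> lies in \<open>[0, 1]\<close>. The key is the constant vector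
  \<open>\<beta> e_dTE\<close>, and the query, read off the marker \<open>B = \<langle>u_x, h_i\<rangle> \<in> {0, 1}\<close>, lets position \<open>m\<close>
  score \<open>\<beta> cos ((i - l - m)/M)\<close> if \<open>B = 1\<close> and \<open>\<beta> sin ((i - m)/M)\<close> if \<open>B = 0\<close>. The first is
  maximal exactly at \<open>m = i - l\<close>, the second at \<open>m = 1\<close>, each with margin at least \<open>\<beta> g\<close> for a
  fixed \<open>g > 0\<close>, and \<open>\<beta> \<ge> ln (T/\<epsilon>)/g\<close> makes the softmax put mass \<open>> 1 - \<epsilon>\<close> there.\<close>

lemma sum_lessThan_add2: "(\<Sum>b<n + 2. g b) = (\<Sum>b<n. g b) + g n + (g (Suc n) :: 'a :: comm_monoid_add)"
  by (simp add: numeral_2_eq_2 add.assoc)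

lemma vinner_commute: "vinner n x y = vinner n y x"
  by (simp add: vinner_def mult.commute)

lemma rope_omega_last_block:
  assumes "M > 0" and "even n"
  shows "rope_omega M (n + 2) ^ (n div 2 + 1) = 1 / real M"
proof -
  have "rope_omega M (n + 2) ^ (n div 2 + 1) = real M powr (- 2 / real (n + 2) * real (n div 2 + 1))"
    unfolding rope_omega_def using \<open>M > 0\<close>
    by (subst powr_realpow[symmetric]) (auto simp: powr_powr simp del: of_nat_add)
  also have "- 2 / real (n + 2) * real (n div 2 + 1) = -1"
    using \<open>even n\<close> by (auto elim!: evenE)
  finally show ?thesis using \<open>M > 0\<close> by (simp add: powr_neg_one)
qed

lemma vinner_block:
  assumes "Suc n < d" and supp: "\<And>j. j \<noteq> n \<Longrightarrow> j \<noteq> Suc n \<Longrightarrow> q j = 0"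
  shows "vinner d q k = q n * k n + q (Suc n) * k (Suc n)"
proof -
  have "vinner d q k = (\<Sum>j\<in>{n, Suc n}. q j * k j)"
    unfolding vinner_def using assms by (intro sum.mono_neutral_right) auto
  then show ?thesis by simp
qed

lemma matvec_rope_mat_block:
  fixes M :: nat and i :: int
  assumes "even n" and "Suc n < d" and supp: "\<And>j. j \<noteq> n \<Longrightarrow> j \<noteq> Suc n \<Longrightarrow> y j = 0"
  defines "\<theta> \<equiv> real_of_int i * rope_omega M d ^ (n div 2 + 1)"
  shows "matvec d (rope_mat M d i) y =
    (\<lambda>a. if a = n then cos \<theta> * y n - sin \<theta> * y (Suc n)
         else if a = Suc n then sin \<theta> * y n + cos \<theta> * y (Suc n) else 0)"
proof
  fix a
  have "matvec d (rope_mat M d i) y a = (\<Sum>b\<in>{n, Suc n}. rope_mat M d i a b * y b)"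
    unfolding matvec_def using assms(2) supp by (intro sum.mono_neutral_right) auto
  moreover have "Suc n div 2 = n div 2" and "a div 2 \<noteq> n div 2" if "a \<noteq> n" "a \<noteq> Suc n"
    using that \<open>even n\<close> by presburger+
  ultimately show "matvec d (rope_mat M d i) y a =
    (if a = n then cos \<theta> * y n - sin \<theta> * y (Suc n)
     else if a = Suc n then sin \<theta> * y n + cos \<theta> * y (Suc n) else 0)"
    using assms(1,2) by (auto simp: rope_mat_def Let_def \<theta>_def)
qed

lemma vinner_rope_mat_block:
  fixes M i m :: nat
  assumes "even n" and "Suc n < d"
    and q_supp: "\<And>j. j \<noteq> n \<Longrightarrow> j \<noteq> Suc n \<Longrightarrow> q j = 0" and k_supp: "\<And>j. j \<noteq> n \<Longrightarrow> k j = 0"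
  defines "F \<equiv> rope_omega M d ^ (n div 2 + 1)"
  shows "vinner d (matvec d (rope_mat M d (int i)) q) (matvec d (rope_mat M d (int m)) k)
    = k n * (q n * cos ((real i - real m) * F) - q (Suc n) * sin ((real i - real m) * F))"
proof -
  have "vinner d (matvec d (rope_mat M d (int i)) q) (matvec d (rope_mat M d (int m)) k)
    = k n * (q n * (cos (i * F) * cos (m * F) + sin (i * F) * sin (m * F))
             - q (Suc n) * (sin (i * F) * cos (m * F) - cos (i * F) * sin (m * F)))"
    using vinner_block[OF assms(2)] k_supp
    by (simp add: matvec_rope_mat_block[OF assms(1,2) q_supp] F_def algebra_simps
        matvec_rope_mat_block[OF assms(1,2), where y=k])
  also have "\<dots> = k n * (q n * cos (i * F - m * F) - q (Suc n) * sin (i * F - m * F))"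
    by (simp add: cos_diff sin_diff)
  finally show ?thesis by (simp add: left_diff_distrib)
qed

lemma vinner_rope_mat_last_block:
  fixes i m :: nat
  assumes "M > 0" and "even n"
    and "\<And>j. j \<noteq> n \<Longrightarrow> j \<noteq> Suc n \<Longrightarrow> q j = 0" and "\<And>j. j \<noteq> n \<Longrightarrow> k j = 0"
  shows "vinner (n + 2) (matvec (n + 2) (rope_mat M (n + 2) (int i)) q)
      (matvec (n + 2) (rope_mat M (n + 2) (int m)) k)
    = k n * (q n * cos ((real i - real m) / real M) - q (Suc n) * sin ((real i - real m) / real M))"
  using vinner_rope_mat_block[OF assms(2) _ assms(3,4), where d="n + 2" and M=M and i=i and m=m]
  unfolding rope_omega_last_block[OF assms(1,2)] by (simp add: divide_inverse)

lemma softmax_gt_of_gap: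
  assumes t: "t \<in> {1..n}" and gap: "\<And>m. m \<in> {1..n} \<Longrightarrow> m \<noteq> t \<Longrightarrow> z m \<le> z t - c"
    and small: "real n * exp (- c) \<le> \<epsilon>" and "\<epsilon> < 1"
  shows "softmax n z t > 1 - \<epsilon>"
proof -
  define \<eta> where "\<eta> = real (n - 1) * exp (- c)"
  have "(\<Sum>m\<in>{1..n} - {t}. exp (z m)) \<le> (\<Sum>m\<in>{1..n} - {t}. exp (z t) * exp (- c))"
    using gap by (intro sum_mono) (auto simp: exp_add[symmetric])
  also have "\<dots> = exp (z t) * \<eta>" using t by (simp add: \<eta>_def)
  finally have rest: "(\<Sum>m\<in>{1..n} - {t}. exp (z m)) \<le> exp (z t) * \<eta>" .
  have "0 \<le> \<eta>" by (simp add: \<eta>_def)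
  have "\<eta> < real n * exp (- c)" using t by (simp add: \<eta>_def)
  then have "\<eta> < \<epsilon>" using small by linarith
  moreover have "0 \<le> \<epsilon> * \<eta>" using \<open>0 \<le> \<eta>\<close> \<open>\<eta> < \<epsilon>\<close> by simp
  ultimately have "(1 - \<epsilon>) * (1 + \<eta>) < 1" by (simp add: algebra_simps)
  have total: "(\<Sum>m\<in>{1..n}. exp (z m)) = exp (z t) + (\<Sum>m\<in>{1..n} - {t}. exp (z m))"
    using t by (simp add: sum.remove)
  have "(1 - \<epsilon>) * (\<Sum>m\<in>{1..n}. exp (z m)) \<le> (1 - \<epsilon>) * (exp (z t) * (1 + \<eta>))"
    using rest \<open>\<epsilon> < 1\<close> unfolding total by (intro mult_left_mono) (auto simp: algebra_simps)
  also have "\<dots> < exp (z t)"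
    using \<open>(1 - \<epsilon>) * (1 + \<eta>) < 1\<close> by (simp add: mult.left_commute)
  finally show ?thesis
    using total rest by (simp add: softmax_def pos_less_divide_eq add_pos_nonneg sum_nonneg)
qed

text \<open>By concavity of \<open>sin\<close> on \<open>[0, 1]\<close>, a step of length \<open>f\<close> gains least at the right end.\<close>

lemma sin_diff_ge:
  fixes f x y :: real
  assumes "0 \<le> f" and "f \<le> x - y" and "0 \<le> y" and "x \<le> 1"
  shows "sin 1 - sin (1 - f) \<le> sin x - sin y"
proof -
  have "sin (f / 2) \<le> sin ((x - y) / 2)"
    using assms pi_ge_two by (subst sin_mono_le_eq) auto
  moreover have "cos (1 - f / 2) \<le> cos ((x + y) / 2)"
    using assms pi_ge_two by (subst cos_mono_le_eq) auto
  moreover have "0 \<le> sin ((x - y) / 2)" and "0 \<le> cos (1 - f / 2)"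
    using assms pi_ge_two by (auto intro!: sin_ge_zero cos_ge_zero)
  ultimately have "sin (f / 2) * cos (1 - f / 2) \<le> sin ((x - y) / 2) * cos ((x + y) / 2)"
    by (intro mult_mono) auto
  then show ?thesis by (simp add: sin_diff_sin diff_divide_distrib)
qed

lemma softmax_cos_peak:
  assumes t: "t \<in> {1..n}" and "n \<le> M" and "0 \<le> \<beta>"
    and small: "real n * exp (- (\<beta> * (1 - cos (1 / real M)))) \<le> \<epsilon>" and "\<epsilon> < 1"
  shows "softmax n (\<lambda>m. \<beta> * cos ((real t - real m) / real M)) t > 1 - \<epsilon>"
proof (rule softmax_gt_of_gap[OF t _ small \<open>\<epsilon> < 1\<close>])
  fix m assume m: "m \<in> {1..n}" "m \<noteq> t"
  have M: "real M \<ge> 1" using t \<open>n \<le> M\<close> by auto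
  have "1 \<le> \<bar>real t - real m\<bar>" and "\<bar>real t - real m\<bar> \<le> real M"
    using m t \<open>n \<le> M\<close> by auto
  then have "1 / real M \<le> \<bar>(real t - real m) / real M\<bar>" and "\<bar>(real t - real m) / real M\<bar> \<le> 1"
    and "0 \<le> 1 / real M"
    using M by (auto simp: field_simps)
  then have "cos \<bar>(real t - real m) / real M\<bar> \<le> cos (1 / real M)"
    using pi_ge_two by (intro cos_monotone_0_pi_le) linarith+
  then have "cos ((real t - real m) / real M) \<le> cos (1 / real M)"
    by (simp only: cos_abs_real)
  then show "\<beta> * cos ((real t - real m) / real M)
      \<le> \<beta> * cos ((real t - real t) / real M) - \<beta> * (1 - cos (1 / real M))"
    using \<open>0 \<le> \<beta>\<close> by (simp add: mult_left_mono algebra_simps)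
qed

lemma softmax_sin_peak:
  assumes "1 \<le> n" and "n \<le> M" and "0 \<le> \<beta>"
    and small: "real n * exp (- (\<beta> * (sin 1 - sin (1 - 1 / real M)))) \<le> \<epsilon>" and "\<epsilon> < 1"
  shows "softmax n (\<lambda>m. \<beta> * sin ((real n - real m) / real M)) 1 > 1 - \<epsilon>"
proof (rule softmax_gt_of_gap[OF _ _ small \<open>\<epsilon> < 1\<close>])
  show "1 \<in> {1..n}" using \<open>1 \<le> n\<close> by simp
  fix m assume m: "m \<in> {1..n}" "m \<noteq> 1"
  have M: "real M \<ge> 1" using assms(1,2) by auto
  have "sin 1 - sin (1 - 1 / real M) \<le> sin ((real n - 1) / real M) - sin ((real n - real m) / real M)"
    using m \<open>n \<le> M\<close> M by (intro sin_diff_ge) (auto simp: field_simps)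
  then show "\<beta> * sin ((real n - real m) / real M)
      \<le> \<beta> * sin ((real n - real 1) / real M) - \<beta> * (sin 1 - sin (1 - 1 / real M))"
    using \<open>0 \<le> \<beta>\<close> mult_left_mono by (fastforce simp: algebra_simps)
qed

definition lookback_key :: "nat \<Rightarrow> real \<Rightarrow> nat \<Rightarrow> nat \<Rightarrow> real" where
  "lookback_key n \<beta> a b = (if a = n \<and> b = n then \<beta> else 0)"

text \<open>On \<open>hvec n y\<close> with marker \<open>B = \<langle>w, y\<rangle>\<close> this query is \<open>(cos \<phi>, -sin \<phi>)\<close> for \<open>B = 1\<close> and
  \<open>(0, -1)\<close> for \<open>B = 0\<close> in the last block, the constant \<open>-1\<close> coming from the coordinate \<open>1\<close>
  of \<open>hvec\<close>. The choice \<open>1 - sin \<phi>\<close> makes the two cases affine in \<open>B\<close>.\<close>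

definition lookback_query :: "nat \<Rightarrow> (nat \<Rightarrow> real) \<Rightarrow> real \<Rightarrow> nat \<Rightarrow> nat \<Rightarrow> real" where
  "lookback_query n w \<phi> a b =
     (if b < n then (if a = n then cos \<phi> * w b else if a = Suc n then (1 - sin \<phi>) * w b else 0)
      else if a = Suc n \<and> b = n then -1 else 0)"

lemma matvec_lookback_key:
  "matvec (n + 2) (lookback_key n \<beta>) (hvec n y) = (\<lambda>a. if a = n then \<beta> else 0)"
proof
  fix a
  have "(\<Sum>b<n. lookback_key n \<beta> a b * hvec n y b) = 0"
    by (intro sum.neutral) (simp add: lookback_key_def)
  then show "matvec (n + 2) (lookback_key n \<beta>) (hvec n y) a = (if a = n then \<beta> else 0)"
    unfolding matvec_def sum_lessThan_add2 by (simp add: lookback_key_def hvec_def)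
qed

lemma matvec_lookback_query:
  "matvec (n + 2) (lookback_query n w \<phi>) (hvec n y) =
    (\<lambda>a. if a = n then cos \<phi> * vinner n w y
         else if a = Suc n then (1 - sin \<phi>) * vinner n w y - 1 else 0)"
proof
  fix a
  have "(\<Sum>b<n. lookback_query n w \<phi> a b * hvec n y b) =
      (if a = n then cos \<phi> * vinner n w y else if a = Suc n then (1 - sin \<phi>) * vinner n w y else 0)"
    by (auto simp: vinner_def lookback_query_def hvec_def sum_distrib_left mult.assoc intro!: sum.cong)
  then show "matvec (n + 2) (lookback_query n w \<phi>) (hvec n y) a =
      (if a = n then cos \<phi> * vinner n w y
       else if a = Suc n then (1 - sin \<phi>) * vinner n w y - 1 else 0)"
    unfolding matvec_def sum_lessThan_add2 by (simp add: lookback_query_def hvec_def)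
qed

lemma rope_score_lookback:
  fixes w :: "nat \<Rightarrow> real" and y :: "nat \<Rightarrow> nat \<Rightarrow> real" and i :: nat
  assumes "M > 0" and "even n"
  defines "B \<equiv> vinner n w (y i)"
  shows "rope_score M (n + 2) (lookback_key n \<beta>) (lookback_query n w \<phi>) (\<lambda>m. hvec n (y m)) i j
    = softmax i (\<lambda>m. \<beta> * (cos \<phi> * B * cos ((real i - real m) / real M)
                        - ((1 - sin \<phi>) * B - 1) * sin ((real i - real m) / real M))) j"
proof -
  have "vinner (n + 2) (matvec (n + 2) (rope_mat M (n + 2) (int i))
          (matvec (n + 2) (lookback_query n w \<phi>) (hvec n (y i))))
        (matvec (n + 2) (rope_mat M (n + 2) (int m)) (matvec (n + 2) (lookback_key n \<beta>) (hvec n (y m))))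
      = \<beta> * (cos \<phi> * B * cos ((real i - real m) / real M)
             - ((1 - sin \<phi>) * B - 1) * sin ((real i - real m) / real M))" for m
    unfolding matvec_lookback_query matvec_lookback_key
    by (subst vinner_rope_mat_last_block[OF assms(1,2)]) (auto simp: B_def)
  then show ?thesis unfolding rope_score_def Let_def by simp
qed

lemma rope_score_lookback_marked:
  assumes "M > 0" and "even n" and "vinner n w (y i) = 1" and "l \<le> i"
  shows "rope_score M (n + 2) (lookback_key n \<beta>) (lookback_query n w (real l / real M))
      (\<lambda>m. hvec n (y m)) i j
    = softmax i (\<lambda>m. \<beta> * cos ((real (i - l) - real m) / real M)) j"
proof -
  have "(real (i - l) - real m) / real M = (real i - real m) / real M - real l / real M" for m
    using \<open>l \<le> i\<close> by (simp add: of_nat_diff diff_divide_distrib)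
  then have "cos ((real (i - l) - real m) / real M) =
      cos (real l / real M) * cos ((real i - real m) / real M)
      + sin (real l / real M) * sin ((real i - real m) / real M)" for m
    by (simp add: cos_diff mult.commute)
  then show ?thesis
    unfolding rope_score_lookback[OF assms(1,2)] assms(3) by (simp add: algebra_simps)
qed

lemma rope_score_lookback_unmarked:
  assumes "M > 0" and "even n" and "vinner n w (y i) = 0"
  shows "rope_score M (n + 2) (lookback_key n \<beta>) (lookback_query n w \<phi>) (\<lambda>m. hvec n (y m)) i j
    = softmax i (\<lambda>m. \<beta> * sin ((real i - real m) / real M)) j"
  unfolding rope_score_lookback[OF assms(1,2)] assms(3) by simp

lemma score_margins_pos:
  assumes "1 \<le> M"
  shows "0 < min (1 - cos (1 / real M)) (sin 1 - sin (1 - 1 / real M))"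
proof -
  have "0 < 1 / real M" and "1 / real M \<le> 1" using assms by auto
  then have "1 / real M \<le> pi" using pi_ge_two by linarith
  then have "cos (1 / real M) < 1"
    using cos_monotone_0_pi[OF order_refl \<open>0 < 1 / real M\<close>] by simp
  moreover have "sin (1 - 1 / real M) < sin 1"
    using \<open>0 < 1 / real M\<close> \<open>1 / real M \<le> 1\<close> pi_ge_two by (subst sin_mono_less_eq) linarith+
  ultimately show ?thesis by simp
qed

lemma exists_inverse_temperature:
  fixes g \<epsilon> :: real
  assumes "0 < g" and "0 < \<epsilon>"
  obtains \<beta> where "0 \<le> \<beta>" and "\<And>g' n. g \<le> g' \<Longrightarrow> n \<le> T \<Longrightarrow> real n * exp (- (\<beta> * g')) \<le> \<epsilon>"
proof
  define \<beta> where "\<beta> = max 0 (ln (real T / \<epsilon>)) / g"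
  show "0 \<le> \<beta>" using \<open>0 < g\<close> by (simp add: \<beta>_def)
  fix g' and n :: nat assume "g \<le> g'" and "n \<le> T"
  have "real n * exp (- (\<beta> * g')) \<le> real T * exp (- (\<beta> * g))"
    using \<open>g \<le> g'\<close> \<open>n \<le> T\<close> \<open>0 \<le> \<beta>\<close> by (intro mult_mono) (auto simp: mult_left_mono)
  also have "\<dots> \<le> \<epsilon>"
  proof (cases "real T \<le> \<epsilon>")
    case True
    have "real T * exp (- (\<beta> * g)) \<le> real T"
      using \<open>0 \<le> \<beta>\<close> \<open>0 < g\<close> by (intro mult_left_le) auto
    with True show ?thesis by linarith
  next
    case False
    then have "\<beta> * g = ln (real T / \<epsilon>)" using assms by (simp add: \<beta>_def)
    moreover have "exp (- ln (real T / \<epsilon>)) = \<epsilon> / real T"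
      using False assms by (simp add: exp_minus)
    ultimately show ?thesis using False assms by simp
  qed
  finally show "real n * exp (- (\<beta> * g')) \<le> \<epsilon>" .
qed

theorem lemma6:
  fixes V dTE M T l x :: nat
    and u :: "nat \<Rightarrow> nat \<Rightarrow> real"
    and \<epsilon> :: real
  assumes "even dTE"
    and orthonormal: "\<forall>v\<in>{1..V}. \<forall>w\<in>{1..V}. vinner dTE (u v) (u w) = (if v = w then 1 else 0)"
    and "M > 0"
    and "x \<in> {1..V}"
    and "T \<ge> 1" and "M \<ge> T"
    and "0 < \<epsilon>" and "\<epsilon> < 1"
  shows "\<exists>K Q :: nat \<Rightarrow> nat \<Rightarrow> real.
    \<forall>ht :: nat \<Rightarrow> nat \<Rightarrow> real.
      ((\<exists>lam :: nat \<Rightarrow> nat \<Rightarrow> real. \<forall>i\<in>{1..T}.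
          (\<forall>v\<in>{1..V}. lam i v \<ge> 0) \<and> (\<Sum>v\<in>{1..V}. (lam i v)\<^sup>2) = 1 \<and>
          (\<forall>j<dTE. ht i j = (\<Sum>v\<in>{1..V}. lam i v * u v j)))
       \<and> (\<forall>i\<in>{1..T}. vinner dTE (u x) (ht i) \<in> {0, 1})
       \<and> (\<forall>i\<in>{1..T}. i \<le> l \<longrightarrow> vinner dTE (u x) (ht i) = 0))
      \<longrightarrow> (\<forall>i\<in>{1..T}.
            (vinner dTE (ht i) (u x) = 1 \<longrightarrow>
               rope_score M (dTE + 2) K Q (\<lambda>m. hvec dTE (ht m)) i (i - l) > 1 - \<epsilon>) \<and>
            (vinner dTE (ht i) (u x) \<noteq> 1 \<longrightarrow>
               rope_score M (dTE + 2) K Q (\<lambda>m. hvec dTE (ht m)) i 1 > 1 - \<epsilon>))"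
proof -
  have "1 \<le> M" using \<open>T \<ge> 1\<close> \<open>M \<ge> T\<close> by simp
  define g where "g = min (1 - cos (1 / real M)) (sin 1 - sin (1 - 1 / real M))"
  have "0 < g" using score_margins_pos[OF \<open>1 \<le> M\<close>] by (simp add: g_def)
  then obtain \<beta> where "0 \<le> \<beta>"
    and small: "\<And>g' n. g \<le> g' \<Longrightarrow> n \<le> T \<Longrightarrow> real n * exp (- (\<beta> * g')) \<le> \<epsilon>"
    using exists_inverse_temperature \<open>0 < \<epsilon>\<close> by blast
  let ?K = "lookback_key dTE \<beta>" and ?Q = "lookback_query dTE (u x) (real l / real M)"
  have marked: "rope_score M (dTE + 2) ?K ?Q (\<lambda>m. hvec dTE (ht m)) i (i - l) > 1 - \<epsilon>"
    if "i \<in> {1..T}" "vinner dTE (u x) (ht i) = 1" "l < i" for ht i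
    unfolding rope_score_lookback_marked[where y=ht, OF \<open>M > 0\<close> \<open>even dTE\<close> that(2)
        less_imp_le[OF that(3)]]
    using that \<open>M \<ge> T\<close>
    by (intro softmax_cos_peak \<open>0 \<le> \<beta>\<close> small \<open>\<epsilon> < 1\<close>) (auto simp: g_def)
  have unmarked: "rope_score M (dTE + 2) ?K ?Q (\<lambda>m. hvec dTE (ht m)) i 1 > 1 - \<epsilon>"
    if "i \<in> {1..T}" "vinner dTE (u x) (ht i) = 0" for ht i
    unfolding rope_score_lookback_unmarked[where y=ht, OF \<open>M > 0\<close> \<open>even dTE\<close> that(2)]
    using that \<open>M \<ge> T\<close>
    by (intro softmax_sin_peak \<open>0 \<le> \<beta>\<close> small \<open>\<epsilon> < 1\<close>) (auto simp: g_def)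
  show ?thesis
    by (rule exI[of _ ?K], rule exI[of _ ?Q]) (use marked unmarked in \<open>auto simp: vinner_commute\<close>)
qed

end
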